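(* Let $m\ge1$ be an integer and $f(z)=\sum_{n\ge0}a_nz^{-n/m}$ a Gevrey-1 series whose Borel transform $\widetilde f(\zeta)=\sum_{n\ge1}\frac{a_n\zeta^{n/m-1}}{\Gamma(n/m)}$ extends analytically to $\Omega^\star$ with $|\widetilde f(\zeta)\zeta^{\frac{m-1}{m}}|\le Ae^{B|\zeta|}$ on $\Omega^\star$ for some $A,B>0$. Let $d_n$ ($n\ge1$) be defined by: for $l=1,\dots,m$, $\widetilde g_l(\xi)=\big(\frac{\xi}{1-e^{-\xi}}\big)^{\frac lm-1}\sum_{k\ge0}\frac{a_{l+mk}\xi^k}{\Gamma(\frac lm+k)}$ (principal branch, extended holomorphically to $\Delta$) and $\widetilde g_l(-\ln s)=\sum_{j\ge0}d_{l+mj}(1-s)^j$ for $s\in D(1,1)$. Then for every $n\ge1$, $$d_n=\frac{1}{\Gamma(\frac nm)}\Big(a_n+\sum_{\substack{j\ge1,\ l\ge1\\ l+jm=n}}d_{\frac lm,j}\,a_l\Big),$$ where for $r>0$ and $j\ge1$ $$d_{r,j}=\Big(\sum_{1\le p\le j}\frac{B_{j,p}\big(\frac{1!}{2},\frac{2!}{3},\dots,\frac{i!}{i+1},\dots\big)}{\Gamma(r-p)}\Big)\frac{\Gamma(r+j)}{j!}.$$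
   Context: $\Delta$ is the image of the open disc $D(1,1)=\{s:|s-1|<1\}$ under $s\mapsto-\ln s$ (principal logarithm); $\Delta^\star=\Delta\setminus\{0\}$; $\mathbb{C}_m^\star$ is the $m$-sheeted covering of $\mathbb{C}^\star$ (points $(|x|,\arg x)$, $\arg x\in\mathbb{R}/2\pi m\mathbb{Z}$, projection $\pi(x)=|x|e^{i\arg x}$, $x^{k/m}$ of modulus $|x|^{k/m}$ and argument $\frac km\arg x$); $\Omega^\star=\pi^{-1}(\Delta^\star)$. Gevrey-1 means $|a_n|\le CK^n\Gamma(1+n/m)$. $1/\Gamma(r-p)$ denotes the (entire) reciprocal Gamma function, equal to $0$ at non-positive integers. $B_{j,p}(x_1,x_2,\dots)$ are the partial exponential Bell polynomials: $B_{j,p}=\sum\frac{j!}{\prod_{i\ge1}k_i!\,(i!)^{k_i}}\prod_{i\ge1}x_i^{k_i}$, the sum over nonnegative integers $k_1,k_2,\dots$ with $\sum_i k_i=p$ and $\sum_i ik_i=j$. *)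

theory Defs
  imports "HOL-Analysis.Analysis"
begin

definition Delta :: "complex set" where
  "Delta = (\<lambda>s. - Ln s) ` ball 1 1"

text \<open>Omega-star, expressed in the global coordinate w = x^(1/m) of the m-sheeted covering
  of C-star (so that the point x has projection w^m and x^(k/m) = w^k).\<close>
definition Omega_star_coord :: "nat \<Rightarrow> complex set" where
  "Omega_star_coord m = {w. w \<noteq> 0 \<and> w ^ m \<in> Delta - {0}}"

definition gevrey1 :: "nat \<Rightarrow> (nat \<Rightarrow> complex) \<Rightarrow> bool" where
  "gevrey1 m a \<longleftrightarrow> (\<exists>C K. \<forall>n. norm (a n) \<le> C * K ^ n * Gamma (1 + real n / real m))"

definition bell_partial :: "nat \<Rightarrow> nat \<Rightarrow> (nat \<Rightarrow> complex) \<Rightarrow> complex" where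
  "bell_partial j p x =
     (\<Sum>k \<in> {k \<in> PiE {1..j} (\<lambda>_. {..p}). (\<Sum>i\<in>{1..j}. k i) = p \<and> (\<Sum>i\<in>{1..j}. i * k i) = j}.
        of_nat (fact j) / of_nat (\<Prod>i\<in>{1..j}. fact (k i) * fact i ^ k i) * (\<Prod>i\<in>{1..j}. x i ^ k i))"

text \<open>d_{r,j}, with 1/Gamma the entire reciprocal Gamma function rGamma.\<close>
definition dcoef :: "real \<Rightarrow> nat \<Rightarrow> complex" where
  "dcoef r j =
     (\<Sum>p\<in>{1..j}. bell_partial j p (\<lambda>i. of_nat (fact i) / of_nat (i + 1)) * rGamma (complex_of_real (r - real p)))
     * Gamma (complex_of_real (r + real j)) / of_nat (fact j)"

end

theory Submission
  imports Defs "HOL-Complex_Analysis.Complex_Analysis"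
begin

(*
  Fix a residue class l in {1..m} and substitute s = 1 - t, so that xi = -ln (1 - t) = t (1 + U t)
  with U t = sum_{i>=1} t^i / (i + 1), and xi / (1 - e^-xi) = 1 + U t.  Near t = 0 the identity
  defining d then reads

     sum_j d_(l+mj) t^j = (1 + U)^(l/m - 1) * sum_k S_k t^k (1 + U)^k,   S_k = a_(l+mk) / Gamma (l/m + k),

  where the Gevrey bound makes sum_k S_k xi^k converge.  Comparing coefficients of t^J gives
  d_(l+mJ) = sum_(k<=J) S_k [t^(J-k)] (1 + U)^(rho_k - 1) with rho_k = (l + mk)/m.  Expanding the
  binomial, [t^j] U^p = p!/j! B_(j,p)(x) for x_i = i!/(i + 1), and (rho - 1 choose p) p! =
  Gamma rho / Gamma (rho - p); so the term k = J is a_n / Gamma (n/m) and the term k < J is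
  d_(rho_k, J-k) a_(l+mk) / Gamma (n/m).
*)

section \<open>Partial Bell polynomials as coefficients of powers\<close>

definition weak_compositions :: "'a set \<Rightarrow> nat \<Rightarrow> ('a \<Rightarrow> nat) set" where
  "weak_compositions I p = {k \<in> I \<rightarrow>\<^sub>E {..p}. (\<Sum>i\<in>I. k i) = p}"

lemma finite_weak_compositions: "finite I \<Longrightarrow> finite (weak_compositions I p)"
  unfolding weak_compositions_def by (auto intro: finite_subset[OF _ finite_PiE[of I "\<lambda>_. {..p}"]])

lemma weak_compositions_empty: "weak_compositions {} p = (if p = 0 then {\<lambda>_. undefined} else {})"
  by (auto simp: weak_compositions_def)

lemma bij_betw_weak_compositions_insert:
  assumes "a \<notin> I" "finite I"
  shows "bij_betw (\<lambda>(q, k). k(a := q)) (SIGMA q:{..p}. weak_compositions I (p - q))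
           (weak_compositions (insert a I) p)" (is "bij_betw ?f ?A ?B")
proof (rule bij_betw_byWitness[where f' = "\<lambda>k. (k a, k(a := undefined))"])
  show "\<forall>qk \<in> ?A. (\<lambda>k. (k a, k(a := undefined))) (?f qk) = qk"
    using assms by (auto simp: weak_compositions_def PiE_def extensional_def)
  show "\<forall>k \<in> ?B. ?f (k a, k(a := undefined)) = k"
    by simp
  have sum_upd: "(\<Sum>i\<in>I. (k(a := q)) i) = (\<Sum>i\<in>I. k i)" for k q
    using assms by (intro sum.cong) auto
  show "?f ` ?A \<subseteq> ?B"
  proof (rule image_subsetI, clarify)
    fix q k assume "q \<le> p" "k \<in> weak_compositions I (p - q)"
    then show "k(a := q) \<in> ?B"
      using assms sum_upd[of k q] by (auto simp: weak_compositions_def PiE_def Pi_def extensional_def)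
  qed
  show "(\<lambda>k. (k a, k(a := undefined))) ` ?B \<subseteq> ?A"
  proof (rule image_subsetI)
    fix k assume k: "k \<in> ?B"
    then have sum_I: "(\<Sum>i\<in>I. k i) = p - k a" and "k a \<le> p"
      using assms by (auto simp: weak_compositions_def)
    moreover have "k i \<le> p - k a" if "i \<in> I" for i
      using member_le_sum[OF that, of k] assms sum_I by auto
    moreover have "(\<Sum>i\<in>I. (k(a := undefined)) i) = (\<Sum>i\<in>I. k i)"
      using assms by (intro sum.cong) auto
    ultimately show "(k a, k(a := undefined)) \<in> ?A"
      using k assms by (auto simp: weak_compositions_def PiE_def Pi_def extensional_def)
  qed
qed

lemma fps_power_sum_multinomial:
  fixes Y :: "'a \<Rightarrow> 'b::field_char_0 fps"
  assumes "finite I"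
  shows "fps_const (1 / fact p) * (\<Sum>i\<in>I. Y i) ^ p
         = (\<Sum>k\<in>weak_compositions I p. \<Prod>i\<in>I. fps_const (1 / fact (k i)) * Y i ^ k i)"
  using assms
proof (induction I arbitrary: p rule: finite_induct)
  case empty
  then show ?case by (simp add: weak_compositions_empty)
next
  case (insert a I)
  define f where "f = (\<lambda>i q. fps_const (1 / fact q) * Y i ^ q)"
  have coeff: "fps_const (1 / fact p) * of_nat (p choose q) * Z
                = fps_const (1 / fact q) * (fps_const (1 / fact (p - q)) * Z)"
    if "q \<le> p" for q and Z :: "'b fps"
    using that by (simp add: binomial_fact flip: fps_of_nat fps_const_mult)
  have "fps_const (1 / fact p) * (\<Sum>i\<in>insert a I. Y i) ^ p
        = (\<Sum>q\<le>p. fps_const (1 / fact p) * of_nat (p choose q) * (Y a ^ q * (\<Sum>i\<in>I. Y i) ^ (p - q)))"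
    using insert.hyps by (simp add: binomial_ring sum_distrib_left mult_ac)
  also have "\<dots> = (\<Sum>q\<le>p. f a q * (fps_const (1 / fact (p - q)) * (\<Sum>i\<in>I. Y i) ^ (p - q)))"
    unfolding f_def by (intro sum.cong refl) (simp only: atMost_iff coeff, simp only: mult_ac)
  also have "\<dots> = (\<Sum>(q, k)\<in>(SIGMA q:{..p}. weak_compositions I (p - q)). f a q * (\<Prod>i\<in>I. f i (k i)))"
    using insert by (simp add: sum.Sigma finite_weak_compositions sum_distrib_left f_def)
  also have "\<dots> = (\<Sum>k\<in>weak_compositions (insert a I) p. \<Prod>i\<in>insert a I. f i (k i))"
  proof -
    have "f a q * (\<Prod>i\<in>I. f i (k i)) = (\<Prod>i\<in>insert a I. f i ((k(a := q)) i))" for q k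
      using insert.hyps by (auto intro!: prod.cong)
    then show ?thesis
      using sum.reindex_bij_betw[OF bij_betw_weak_compositions_insert[OF insert.hyps(2,1)],
          of "\<lambda>k. \<Prod>i\<in>insert a I. f i (k i)" p]
      by (simp add: case_prod_unfold)
  qed
  finally show ?case unfolding f_def .
qed

lemma fps_cutoff_mult_cutoff:
  "fps_cutoff n (fps_cutoff n f * fps_cutoff n g) = fps_cutoff n (f * g)"
  by (rule fps_ext) (simp add: fps_cutoff_left_mult_nth fps_cutoff_right_mult_nth)

lemma fps_cutoff_power_cutoff: "fps_cutoff n (fps_cutoff n f ^ p) = fps_cutoff n (f ^ p)"
proof (induction p)
  case (Suc p)
  have idem: "fps_cutoff n (fps_cutoff n f) = fps_cutoff n f"
    by (rule fps_ext) simp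
  have "fps_cutoff n (fps_cutoff n f ^ Suc p)
        = fps_cutoff n (fps_cutoff n (fps_cutoff n f) * fps_cutoff n (fps_cutoff n f ^ p))"
    by (simp only: fps_cutoff_mult_cutoff power_Suc)
  also have "\<dots> = fps_cutoff n (f ^ Suc p)"
    by (simp only: idem Suc.IH fps_cutoff_mult_cutoff power_Suc)
  finally show ?case .
qed simp

lemma prod_fps_const_mult_fps_X_power:
  assumes "finite I"
  shows "(\<Prod>i\<in>I. fps_const (c i) * fps_X ^ e i)
         = fps_const (\<Prod>i\<in>I. c i :: 'a::comm_ring_1) * fps_X ^ (\<Sum>i\<in>I. e i)"
  using assms by (induction I rule: finite_induct) (simp_all add: power_add mult_ac)

definition reduced_egf :: "(nat \<Rightarrow> 'a::field_char_0) \<Rightarrow> 'a fps" where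
  "reduced_egf x = Abs_fps (\<lambda>i. if i = 0 then 0 else x i / fact i)"

lemma bell_partial_eq_fps_power_nth: "bell_partial j p x = fact j / fact p * (reduced_egf x ^ p) $ j"
proof -
  define V where "V = (\<Sum>i\<in>{1..j}. fps_const (x i / fact i) * fps_X ^ i)"
  have "fps_cutoff (Suc j) V = fps_cutoff (Suc j) (reduced_egf x)"
    by (rule fps_ext) (auto simp: V_def reduced_egf_def fps_sum_nth fps_X_power_nth if_distrib sum.delta cong: if_cong)
  then have power_nth: "(reduced_egf x ^ p) $ j = (V ^ p) $ j"
    by (metis fps_cutoff_power_cutoff fps_cutoff_nth lessI)
  define w where "w = (\<lambda>k. \<Prod>i\<in>{1..j}. (x i / fact i) ^ k i / fact (k i))"
  have multinomial: "fps_const (1 / fact p) * V ^ p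
        = (\<Sum>k\<in>weak_compositions {1..j} p. fps_const (w k) * fps_X ^ (\<Sum>i\<in>{1..j}. i * k i))"
    unfolding V_def fps_power_sum_multinomial[OF finite_atLeastAtMost] w_def
    by (intro sum.cong refl, subst prod_fps_const_mult_fps_X_power[symmetric])
       (auto intro!: prod.cong simp: power_mult_distrib fps_const_power power_mult mult_ac)
  have "(V ^ p) $ j / fact p
        = (\<Sum>k\<in>weak_compositions {1..j} p. if (\<Sum>i\<in>{1..j}. i * k i) = j then w k else 0)"
  proof -
    have "(V ^ p) $ j / fact p = (fps_const (1 / fact p) * V ^ p) $ j"
      by simp
    then show ?thesis
      unfolding multinomial fps_sum_nth
      by (auto simp: fps_X_power_nth intro!: sum.cong)
  qed
  also have "\<dots> = (\<Sum>k\<in>{k \<in> weak_compositions {1..j} p. (\<Sum>i\<in>{1..j}. i * k i) = j}. w k)"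
    by (simp add: sum.inter_filter finite_weak_compositions)
  also have "fact j * \<dots> = bell_partial j p x"
    unfolding bell_partial_def weak_compositions_def sum_distrib_left
    by (intro sum.cong) (auto simp: w_def of_nat_prod prod_dividef power_divide prod.distrib[symmetric] field_simps)
  finally show ?thesis
    using power_nth by (simp add: field_simps)
qed

section \<open>Binomial series composed with a series without constant term\<close>

lemma gbinomial_minus_one_eq_Gamma_rGamma:
  fixes z :: complex
  assumes "z \<notin> \<int>\<^sub>\<le>\<^sub>0"
  shows "(z - 1) gchoose p = Gamma z * rGamma (z - of_nat p) / fact p"
proof -
  have "rGamma (z - of_nat p) = pochhammer (z - of_nat p) p * rGamma z"
    using pochhammer_rGamma[of "z - of_nat p" p] by simp
  then have "pochhammer (z - of_nat p) p = Gamma z * rGamma (z - of_nat p)"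
    using assms by (simp add: rGamma_inverse_Gamma Gamma_eq_zero_iff field_simps)
  then show ?thesis
    by (simp add: gbinomial_pochhammer' algebra_simps)
qed

lemma fps_binomial_compose_reduced_egf_nth:
  fixes z :: complex
  assumes "z \<notin> \<int>\<^sub>\<le>\<^sub>0" "j \<ge> 1"
  shows "(fps_binomial (z - 1) oo reduced_egf x) $ j
         = Gamma z / fact j * (\<Sum>p\<in>{1..j}. bell_partial j p x * rGamma (z - of_nat p))"
proof -
  have "(fps_binomial (z - 1) oo reduced_egf x) $ j = (\<Sum>p=0..j. ((z - 1) gchoose p) * (reduced_egf x ^ p) $ j)"
    by (simp add: fps_compose_nth)
  also have "\<dots> = (\<Sum>p=1..j. ((z - 1) gchoose p) * (reduced_egf x ^ p) $ j)"
    using assms(2) by (subst sum.atLeast_Suc_atMost) auto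
  also have "\<dots> = Gamma z / fact j * (\<Sum>p\<in>{1..j}. bell_partial j p x * rGamma (z - of_nat p))"
    unfolding sum_distrib_left
    by (intro sum.cong refl) (simp add: gbinomial_minus_one_eq_Gamma_rGamma[OF assms(1)] bell_partial_eq_fps_power_nth)
  finally show ?thesis .
qed

lemma fps_binomial_compose_mult_compose_nth:
  fixes U S :: "'a::field_char_0 fps"
  assumes U0: "U $ 0 = 0"
  shows "((fps_binomial c oo U) * (S oo (fps_X * (1 + U)))) $ J
         = (\<Sum>k=0..J. S $ k * (fps_binomial (c + of_nat k) oo U) $ (J - k))"
proof -
  define P where "P = fps_binomial c oo U"
  define Xi where "Xi = fps_X * (1 + U)"
  have Xi_power: "Xi ^ k = fps_X ^ k * (1 + U) ^ k" for k
    by (simp add: Xi_def power_mult_distrib)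
  have P_mult_Xi_power: "P * Xi ^ k = fps_X ^ k * (fps_binomial (c + of_nat k) oo U)" for k
  proof -
    have "(1 + U) ^ k = fps_binomial (of_nat k) oo U"
      using U0 by (simp add: fps_binomial_of_nat fps_compose_add_distrib flip: fps_compose_power)
    then have "P * (1 + U) ^ k = fps_binomial (c + of_nat k) oo U"
      using U0 by (simp add: P_def fps_binomial_add_mult fps_compose_mult_distrib)
    then show ?thesis by (simp add: Xi_power mult_ac)
  qed
  have "(P * (S oo Xi)) $ J = (\<Sum>i=0..J. P $ i * (\<Sum>k=0..J. S $ k * (Xi ^ k) $ (J - i)))"
    unfolding fps_mult_nth fps_compose_nth
    by (intro sum.cong refl arg_cong2[where f = "(*)"] sum.mono_neutral_left)
       (auto simp: Xi_power fps_X_power_mult_nth)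
  also have "\<dots> = (\<Sum>k=0..J. S $ k * (\<Sum>i=0..J. P $ i * (Xi ^ k) $ (J - i)))"
    unfolding sum_distrib_left by (subst sum.swap) (simp add: mult.left_commute)
  also have "\<dots> = (\<Sum>k=0..J. S $ k * (P * Xi ^ k) $ J)"
    by (simp only: fps_mult_nth)
  also have "\<dots> = (\<Sum>k=0..J. S $ k * (fps_binomial (c + of_nat k) oo U) $ (J - k))"
    by (intro sum.cong refl) (simp add: P_mult_Xi_power fps_X_power_mult_nth)
  finally show ?thesis unfolding P_def Xi_def .
qed

text \<open>The series of \<open>-ln (1 - t) / t - 1\<close>; the arguments \<open>i! / (i + 1)\<close> of the Bell polynomials
  in \<^const>\<open>dcoef\<close> are \<open>i!\<close> times its coefficients.\<close>
definition log_ratio_fps :: "complex fps" where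
  "log_ratio_fps = reduced_egf (\<lambda>i. of_nat (fact i) / of_nat (i + 1))"

lemma log_ratio_fps_nth: "log_ratio_fps $ i = (if i = 0 then 0 else 1 / of_nat (i + 1))"
  by (simp add: log_ratio_fps_def reduced_egf_def)

lemma fps_X_mult_one_plus_log_ratio_fps: "fps_X * (1 + log_ratio_fps) = Abs_fps (\<lambda>n. 1 / of_nat n)"
proof (rule fps_ext)
  fix n :: nat
  show "(fps_X * (1 + log_ratio_fps)) $ n = Abs_fps (\<lambda>n. 1 / of_nat n) $ n"
    by (cases n) (auto simp: log_ratio_fps_nth)
qed

lemma fps_binomial_compose_log_ratio_fps_nth:
  assumes "r > 0" "j \<ge> 1"
  shows "(fps_binomial (complex_of_real r - 1) oo log_ratio_fps) $ j / Gamma (complex_of_real r)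
         = dcoef r j / Gamma (complex_of_real (r + real j))"
proof -
  have pos: "complex_of_real x \<notin> \<int>\<^sub>\<le>\<^sub>0" if "x > 0" for x
    using that by (auto simp: of_real_in_nonpos_Ints_iff)
  have r: "complex_of_real r \<notin> \<int>\<^sub>\<le>\<^sub>0"
    using assms(1) by (rule pos)
  moreover have "complex_of_real (r + real j) \<notin> \<int>\<^sub>\<le>\<^sub>0"
    using assms(1) by (intro pos) simp
  ultimately have "Gamma (complex_of_real r) \<noteq> 0" "Gamma (complex_of_real (r + real j)) \<noteq> 0"
    by (simp_all add: Gamma_eq_zero_iff)
  then show ?thesis
    unfolding log_ratio_fps_def fps_binomial_compose_reduced_egf_nth[OF r assms(2)] dcoef_def
    by (simp add: rGamma_inverse_Gamma)
qed

section \<open>The substitution \<open>\<xi> = -ln (1 - t)\<close>\<close>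

lemma fps_expansions_eq_if_eventually_eq_at_0:
  fixes f g :: "complex \<Rightarrow> complex"
  assumes "f has_fps_expansion F" "g has_fps_expansion G" "eventually (\<lambda>x. f x = g x) (at 0)"
  shows "F = G"
proof -
  have "f has_laurent_expansion fps_to_fls F" "g has_laurent_expansion fps_to_fls G"
    using assms(1,2) by (simp_all add: has_fps_expansion_to_laurent)
  then have "f has_laurent_expansion fps_to_fls G"
    using has_laurent_expansion_cong[OF assms(3) refl] by simp
  then show ?thesis
    using has_laurent_expansion_unique \<open>f has_laurent_expansion fps_to_fls F\<close> by fastforce
qed

lemma has_fps_expansion_neg_Ln_one_minus:
  "(\<lambda>t. - Ln (1 - t)) has_fps_expansion fps_X * (1 + log_ratio_fps)"
  unfolding fps_X_mult_one_plus_log_ratio_fps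
proof (rule has_fps_expansionI)
  have "eventually (\<lambda>t::complex. t \<in> ball 0 1) (nhds 0)"
    by (rule eventually_nhds_in_open) auto
  then show "eventually (\<lambda>t. (\<lambda>n. Abs_fps (\<lambda>n. 1 / of_nat n) $ n * t ^ n) sums - Ln (1 - t)) (nhds 0)"
  proof eventually_elim
    case (elim t)
    then have "norm (- t) < 1" by simp
    from sums_minus[OF Ln_series'[OF this]] show ?case
      by (simp add: field_simps)
  qed
qed

lemma has_fps_expansion_neg_Ln_one_minus_div_powr:
  "(\<lambda>t. (if t = 0 then 1 else - Ln (1 - t) / t) powr c) has_fps_expansion (fps_binomial c oo log_ratio_fps)"
proof -
  define \<psi> where "\<psi> = (\<lambda>t. if t = 0 then 1 else - Ln (1 - t) / t)"
  have "subdegree (fps_X * (1 + log_ratio_fps)) \<ge> 1"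
    by (rule subdegree_geI) (auto simp: log_ratio_fps_nth dest: arg_cong[where f = "\<lambda>F. fps_nth F 0"])
  from has_fps_expansion_shift[OF has_fps_expansion_neg_Ln_one_minus this refl]
  have "\<psi> has_fps_expansion fps_shift 1 ((1 + log_ratio_fps) * fps_X)"
    by (simp add: \<psi>_def log_ratio_fps_nth mult.commute[of fps_X] cong: if_cong)
  then have "\<psi> has_fps_expansion 1 + log_ratio_fps"
    by (simp only: fps_shift_times_fps_X')
  then have "(\<lambda>t. \<psi> t - 1) has_fps_expansion log_ratio_fps"
    using has_fps_expansion_diff[OF _ has_fps_expansion_1] by fastforce
  from has_fps_expansion_compose[OF has_fps_expansion_binomial_complex this]
  show ?thesis
    by (simp add: o_def \<psi>_def log_ratio_fps_nth)
qed

lemma Abs_fps_eq_after_neg_Ln_substitution: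
  fixes G :: "complex \<Rightarrow> complex" and D :: "nat \<Rightarrow> complex" and S :: "complex fps"
  assumes S: "fps_conv_radius S > 0" and r: "r > 0"
    and G: "\<forall>\<xi>\<in>ball 0 r - {0}. G \<xi> = (\<xi> / (1 - exp (- \<xi>))) powr c * eval_fps S \<xi>"
    and D: "\<forall>s\<in>ball 1 1. (\<lambda>j. D j * (1 - s) ^ j) sums G (- Ln s)"
  shows "Abs_fps D = (fps_binomial c oo log_ratio_fps) * (S oo fps_X * (1 + log_ratio_fps))"
proof -
  define L where "L t = - Ln (1 - t)" for t :: complex
  define \<psi> where "\<psi> = (\<lambda>t. if t = 0 then 1 else L t / t)"
  have L: "L has_fps_expansion fps_X * (1 + log_ratio_fps)"
    unfolding L_def by (rule has_fps_expansion_neg_Ln_one_minus)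
  have "(\<lambda>t. \<psi> t powr c) has_fps_expansion (fps_binomial c oo log_ratio_fps)"
    unfolding \<psi>_def L_def by (rule has_fps_expansion_neg_Ln_one_minus_div_powr)
  moreover have "(\<lambda>t. eval_fps S (L t)) has_fps_expansion (S oo fps_X * (1 + log_ratio_fps))"
    using has_fps_expansion_compose[OF eval_fps_has_fps_expansion[OF S] L] by (simp add: o_def)
  ultimately have RHS: "(\<lambda>t. \<psi> t powr c * eval_fps S (L t)) has_fps_expansion
                          (fps_binomial c oo log_ratio_fps) * (S oo fps_X * (1 + log_ratio_fps))"
    by (rule has_fps_expansion_mult)
  have "eventually (\<lambda>t::complex. t \<in> ball 0 1) (nhds 0)"
    by (rule eventually_nhds_in_open) auto
  then have LHS: "(\<lambda>t. G (L t)) has_fps_expansion Abs_fps D"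
  proof (intro has_fps_expansionI, elim eventually_mono)
    fix t :: complex assume "t \<in> ball 0 1"
    then have "1 - t \<in> ball 1 1"
      by (simp add: dist_norm)
    from D[rule_format, OF this] show "(\<lambda>n. Abs_fps D $ n * t ^ n) sums G (L t)"
      by (simp add: L_def)
  qed
  have "(L \<longlongrightarrow> 0) (at 0)"
    using has_fps_expansion_imp_continuous[OF L] by (simp add: continuous_within L_def)
  then have "eventually (\<lambda>t. L t \<in> ball 0 r) (at 0)"
    using r by (intro topological_tendstoD) auto
  moreover have "eventually (\<lambda>t::complex. t \<in> ball 0 1 - {0}) (at 0)"
    by (rule eventually_at_in_open) auto
  ultimately have "eventually (\<lambda>t. G (L t) = \<psi> t powr c * eval_fps S (L t)) (at 0)"
  proof eventually_elim
    case (elim t)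
    then have "1 - t \<noteq> 0"
      by auto
    then have "exp (- L t) = 1 - t"
      by (simp add: L_def)
    with elim have "L t \<in> ball 0 r - {0}" and "L t / (1 - exp (- L t)) = \<psi> t"
      by (auto simp: \<psi>_def)
    then show ?case
      using G by auto
  qed
  then show ?thesis
    by (rule fps_expansions_eq_if_eventually_eq_at_0[OF LHS RHS])
qed

section \<open>Convergence from the Gevrey bound\<close>

lemma conv_radius_pos_if_geometric_bound:
  fixes f :: "nat \<Rightarrow> complex"
  assumes bound: "\<And>k. norm (f k) \<le> C * R ^ k" and R: "R > 0"
  shows "conv_radius f > 0"
proof -
  define z where "z = complex_of_real (1 / (2 * R))"
  have norm_z: "norm z = 1 / (2 * R)"
    unfolding z_def norm_of_real using R by simp
  have term_bound: "norm (f k * z ^ k) \<le> C * (1 / 2) ^ k" for k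
  proof -
    have "norm (f k * z ^ k) = norm (f k) * (1 / (2 * R)) ^ k"
      by (simp add: norm_z norm_mult norm_power)
    also have "\<dots> \<le> C * R ^ k * (1 / (2 * R)) ^ k"
      using R by (intro mult_right_mono bound) simp
    also have "\<dots> = C * (R * (1 / (2 * R))) ^ k"
      by (simp only: power_mult_distrib mult.assoc)
    also have "R * (1 / (2 * R)) = 1 / 2"
      using R by simp
    finally show ?thesis .
  qed
  have "summable (\<lambda>k. C * (1 / 2 :: real) ^ k)"
    by (intro summable_mult summable_geometric) simp
  then have "summable (\<lambda>k. f k * z ^ k)"
    by (rule summable_comparison_test'[where N = 0]) (rule term_bound)
  then have "conv_radius f \<ge> norm z"
    by (rule conv_radius_geI)
  moreover have "norm z > 0"
    using R by (simp add: norm_z)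
  ultimately show ?thesis
    by (simp add: order_less_le_trans[of 0 "ereal (norm z)"])
qed

lemma gevrey1_Borel_coeff_bound:
  assumes "gevrey1 m a" "m \<ge> 1"
  obtains C K :: real where "C \<ge> 0" "K \<ge> 1"
    "\<And>n. n \<ge> 1 \<Longrightarrow> norm (a n / Gamma (complex_of_real (real n / real m))) \<le> C * K ^ n * (real n / real m)"
proof -
  obtain C K where CK: "\<And>n. norm (a n) \<le> C * K ^ n * Gamma (1 + real n / real m)"
    using assms(1) unfolding gevrey1_def by blast
  have "norm (a n / Gamma (complex_of_real (real n / real m))) \<le> \<bar>C\<bar> * (\<bar>K\<bar> + 1) ^ n * (real n / real m)"
    if "n \<ge> 1" for n
  proof -
    define x where "x = real n / real m"
    have x: "x > 0"
      using that assms(2) by (simp add: x_def)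
    then have Gamma_Suc: "Gamma (1 + x) = x * Gamma x"
      using Gamma_plus1[of x] nonpos_Ints_nonpos[of x] by (metis add.commute not_le)
    have "C * K ^ n \<le> \<bar>C\<bar> * (\<bar>K\<bar> + 1) ^ n"
      by (rule order_trans[OF abs_ge_self]) (simp add: abs_mult power_abs mult_left_mono power_mono)
    moreover have "Gamma (1 + x) > 0"
      using x by simp
    ultimately have "norm (a n) \<le> \<bar>C\<bar> * (\<bar>K\<bar> + 1) ^ n * Gamma (1 + x)"
      using CK[of n] unfolding x_def by (meson mult_right_mono less_imp_le order_trans)
    then have "norm (a n) \<le> \<bar>C\<bar> * (\<bar>K\<bar> + 1) ^ n * (x * Gamma x)"
      by (simp only: Gamma_Suc)
    moreover have "norm (Gamma (complex_of_real x)) = Gamma x"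
      using x by (simp add: Gamma_complex_of_real)
    ultimately show ?thesis
      using x unfolding x_def[symmetric] norm_divide by (simp add: divide_le_eq mult_ac)
  qed
  then show ?thesis
    using that[of "\<bar>C\<bar>" "\<bar>K\<bar> + 1"] by simp
qed

lemma fps_conv_radius_Borel_subseries_pos:
  assumes "gevrey1 m a" "m \<ge> 1" "l \<in> {1..m}"
  shows "fps_conv_radius (Abs_fps (\<lambda>k. a (l + m * k) / Gamma (complex_of_real (real l / real m + real k)))) > 0"
proof -
  obtain C K where C: "C \<ge> 0" and K: "K \<ge> 1" and bound:
    "\<And>n. n \<ge> 1 \<Longrightarrow> norm (a n / Gamma (complex_of_real (real n / real m))) \<le> C * K ^ n * (real n / real m)"
    using gevrey1_Borel_coeff_bound[OF assms(1,2)] by blast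
  have "norm (a (l + m * k) / Gamma (complex_of_real (real l / real m + real k))) \<le> C * K ^ l * (2 * K ^ m) ^ k" for k
  proof -
    have index: "real l / real m + real k = real (l + m * k) / real m"
      using assms(2) by (simp add: field_simps)
    have "1 + real k \<le> 2 ^ k"
      using less_exp[of k] by (metis Suc_leI of_nat_Suc of_nat_le_iff of_nat_numeral of_nat_power)
    moreover have "real l / real m \<le> 1"
      using assms(3) by simp
    ultimately have "real l / real m + real k \<le> 2 ^ k"
      by linarith
    then have "C * K ^ (l + m * k) * (real l / real m + real k) \<le> C * K ^ (l + m * k) * 2 ^ k"
      using C K by (intro mult_left_mono) simp_all
    also have "\<dots> = C * K ^ l * (2 * K ^ m) ^ k"
      by (simp add: power_add power_mult power_mult_distrib)
    finally show ?thesis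
      using bound[of "l + m * k"] assms(3) unfolding index by simp
  qed
  then show ?thesis
    unfolding fps_conv_radius_def using K
    by (intro conv_radius_pos_if_geometric_bound[where C = "C * K ^ l" and R = "2 * K ^ m"]) auto
qed

section \<open>Comparing coefficients\<close>

lemma sum_decompositions_eq_sum_lessThan:
  fixes l m J :: nat and T :: "nat \<Rightarrow> nat \<Rightarrow> 'a::comm_monoid_add"
  assumes "l \<in> {1..m}"
  shows "(\<Sum>(j, L) \<in> {(j, L). j \<ge> 1 \<and> L \<ge> 1 \<and> L + j * m = l + m * J}. T j L)
         = (\<Sum>k<J. T (J - k) (l + m * k))"
proof (rule sym, rule sum.reindex_bij_witness[where j = "\<lambda>k. (J - k, l + m * k)" and i = "\<lambda>(j, L). J - j"])
  fix k assume "k \<in> {..<J}"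
  then obtain q where q: "J = k + Suc q"
    using less_imp_Suc_add by fastforce
  then show "(J - k, l + m * k) \<in> {(j, L). j \<ge> 1 \<and> L \<ge> 1 \<and> L + j * m = l + m * J}"
    using assms by (auto simp: algebra_simps)
  show "(case (J - k, l + m * k) of (j, L) \<Rightarrow> J - j) = k"
    using q by simp
  show "(case (J - k, l + m * k) of (j, L) \<Rightarrow> T j L) = T (J - k) (l + m * k)"
    by simp
next
  fix jL assume "jL \<in> {(j, L). j \<ge> 1 \<and> L \<ge> 1 \<and> L + j * m = l + m * J}"
  then obtain j L where jL: "jL = (j, L)" "j \<ge> 1" "L \<ge> 1" "L + j * m = l + m * J"
    by auto
  have "j \<le> J"
  proof (rule ccontr)
    assume "\<not> j \<le> J"
    then have "(J + 1) * m \<le> j * m"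
      by (intro mult_right_mono) auto
    then show False
      using jL assms by (simp add: algebra_simps)
  qed
  then obtain q where q: "J = j + q"
    using le_Suc_ex by blast
  then have "L = l + m * q"
    using jL by (simp add: algebra_simps)
  then show "(\<lambda>k. (J - k, l + m * k)) (case jL of (j, L) \<Rightarrow> J - j) = jL"
    using jL q by auto
  show "(case jL of (j, L) \<Rightarrow> J - j) \<in> {..<J}"
    using jL \<open>j \<le> J\<close> by auto
qed

lemma fps_nth_binomial_mult_Borel_substitution:
  fixes a :: "nat \<Rightarrow> complex"
  assumes m: "m \<ge> 1" and l: "l \<in> {1..m}"
  defines "S \<equiv> Abs_fps (\<lambda>k. a (l + m * k) / Gamma (complex_of_real (real l / real m + real k)))"
    and "c \<equiv> complex_of_real (real l / real m - 1)"
  shows "((fps_binomial c oo log_ratio_fps) * (S oo fps_X * (1 + log_ratio_fps))) $ J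
         = (a (l + m * J) + (\<Sum>(j, L) \<in> {(j, L). j \<ge> 1 \<and> L \<ge> 1 \<and> L + j * m = l + m * J}.
                                   dcoef (real L / real m) j * a L))
           / Gamma (of_real (real (l + m * J) / real m))"
proof -
  define \<rho> where "\<rho> k = real (l + m * k) / real m" for k
  define \<Gamma>n where "\<Gamma>n = Gamma (complex_of_real (\<rho> J))"
  have \<rho>_eq: "real l / real m + real k = \<rho> k" for k
    using m by (simp add: \<rho>_def field_simps)
  have \<rho>_pos: "\<rho> k > 0" for k
    using m l unfolding \<rho>_def by (intro divide_pos_pos) (auto simp del: of_nat_add)
  have summand: "S $ k * (fps_binomial (c + of_nat k) oo log_ratio_fps) $ (J - k)
              = dcoef (\<rho> k) (J - k) * a (l + m * k) / \<Gamma>n" if "k < J" for k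
  proof -
    have "c + of_nat k = complex_of_real (\<rho> k) - 1"
      by (simp add: c_def flip: \<rho>_eq)
    moreover have "\<rho> k + real (J - k) = \<rho> J"
      using that by (simp add: of_nat_diff flip: \<rho>_eq)
    moreover have "S $ k = a (l + m * k) / Gamma (complex_of_real (\<rho> k))"
      unfolding S_def fps_nth_Abs_fps \<rho>_eq ..
    ultimately have "S $ k * (fps_binomial (c + of_nat k) oo log_ratio_fps) $ (J - k)
        = a (l + m * k) * ((fps_binomial (complex_of_real (\<rho> k) - 1) oo log_ratio_fps) $ (J - k)
                           / Gamma (complex_of_real (\<rho> k)))"
      by simp
    also have "\<dots> = dcoef (\<rho> k) (J - k) * a (l + m * k) / \<Gamma>n"
      using fps_binomial_compose_log_ratio_fps_nth[OF \<rho>_pos, of "J - k" k] that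
      unfolding \<open>\<rho> k + real (J - k) = \<rho> J\<close> \<Gamma>n_def[symmetric] by simp
    finally show ?thesis .
  qed
  have "((fps_binomial c oo log_ratio_fps) * (S oo fps_X * (1 + log_ratio_fps))) $ J
        = (\<Sum>k=0..J. S $ k * (fps_binomial (c + of_nat k) oo log_ratio_fps) $ (J - k))"
    by (rule fps_binomial_compose_mult_compose_nth) (simp add: log_ratio_fps_nth)
  also have "\<dots> = a (l + m * J) / \<Gamma>n + (\<Sum>k<J. dcoef (\<rho> k) (J - k) * a (l + m * k) / \<Gamma>n)"
  proof -
    have "S $ J = a (l + m * J) / \<Gamma>n"
      by (simp add: S_def \<rho>_eq \<Gamma>n_def)
    then show ?thesis
      using summand by (simp add: atLeast0AtMost add.commute flip: lessThan_Suc_atMost)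
  qed
  also have "\<dots> = (a (l + m * J) + (\<Sum>(j, L) \<in> {(j, L). j \<ge> 1 \<and> L \<ge> 1 \<and> L + j * m = l + m * J}.
                                              dcoef (real L / real m) j * a L)) / \<Gamma>n"
    unfolding sum_decompositions_eq_sum_lessThan[OF l] \<rho>_def by (simp add: add_divide_distrib sum_divide_distrib)
  finally show ?thesis
    by (simp only: \<Gamma>n_def \<rho>_def)
qed

lemma coefficient_formula_in_residue_class:
  fixes a d :: "nat \<Rightarrow> complex" and G :: "complex \<Rightarrow> complex"
  assumes m: "m \<ge> 1" and l: "l \<in> {1..m}" and gev: "gevrey1 m a"
    and G: "\<exists>r>0. \<forall>\<xi> \<in> ball 0 r - {0}.
              G \<xi> = (\<xi> / (1 - exp (- \<xi>))) powr (of_real (real l / real m - 1))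
                    * (\<Sum>k. a (l + m * k) * \<xi> ^ k / Gamma (of_real (real l / real m + real k)))"
    and d: "\<forall>s \<in> ball 1 1. (\<lambda>j. d (l + m * j) * (1 - s) ^ j) sums G (- Ln s)"
  shows "d (l + m * J) = (a (l + m * J) + (\<Sum>(j, L) \<in> {(j, L). j \<ge> 1 \<and> L \<ge> 1 \<and> L + j * m = l + m * J}.
                                              dcoef (real L / real m) j * a L))
                         / Gamma (of_real (real (l + m * J) / real m))"
proof -
  define S where "S = Abs_fps (\<lambda>k. a (l + m * k) / Gamma (complex_of_real (real l / real m + real k)))"
  define c where "c = complex_of_real (real l / real m - 1)"
  obtain r where "r > 0"
    and G_S: "\<forall>\<xi> \<in> ball 0 r - {0}. G \<xi> = (\<xi> / (1 - exp (- \<xi>))) powr c * eval_fps S \<xi>"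
    using G by (auto simp: c_def S_def eval_fps_def)
  have "Abs_fps (\<lambda>j. d (l + m * j)) = (fps_binomial c oo log_ratio_fps) * (S oo fps_X * (1 + log_ratio_fps))"
    using fps_conv_radius_Borel_subseries_pos[OF gev m l] \<open>r > 0\<close> G_S d unfolding S_def
    by (rule Abs_fps_eq_after_neg_Ln_substitution)
  then have "d (l + m * J) = ((fps_binomial c oo log_ratio_fps) * (S oo fps_X * (1 + log_ratio_fps))) $ J"
    by (metis fps_nth_Abs_fps)
  then show ?thesis
    unfolding S_def c_def fps_nth_binomial_mult_Borel_substitution[OF m l] .
qed

text \<open>Only the germs of the \<open>g l\<close> at \<open>0\<close> matter.\<close>

theorem proposition5p5:
  fixes m :: nat and a :: "nat \<Rightarrow> complex" and A B :: real
    and g :: "nat \<Rightarrow> complex \<Rightarrow> complex" and d :: "nat \<Rightarrow> complex"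
  assumes m: "m \<ge> 1"
    and gev: "gevrey1 m a"
    and borel: "\<exists>F. F holomorphic_on Omega_star_coord m
                 \<and> (\<exists>r>0. \<forall>w \<in> ball 0 r - {0}.
                       F w = (\<Sum>n. a (Suc n) * w ^ Suc n / w ^ m / Gamma (of_real (real (Suc n) / real m))))
                 \<and> (\<forall>w \<in> Omega_star_coord m. norm (F w * w ^ (m - 1)) \<le> A * exp (B * norm w ^ m))"
    and AB: "A > 0" "B > 0"
    and g_holo: "\<forall>l\<in>{1..m}. g l holomorphic_on Delta"
    and g_def: "\<forall>l\<in>{1..m}. \<exists>r>0. \<forall>\<xi> \<in> ball 0 r - {0}.
                 g l \<xi> = (\<xi> / (1 - exp (- \<xi>))) powr (of_real (real l / real m - 1))
                         * (\<Sum>k. a (l + m * k) * \<xi> ^ k / Gamma (of_real (real l / real m + real k)))"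
    and d_def: "\<forall>l\<in>{1..m}. \<forall>s \<in> ball 1 1.
                 (\<lambda>j. d (l + m * j) * (1 - s) ^ j) sums g l (- Ln s)"
  shows "\<forall>n\<ge>1. d n = (a n + (\<Sum>(j, l) \<in> {(j, l). j \<ge> 1 \<and> l \<ge> 1 \<and> l + j * m = n}.
                                   dcoef (real l / real m) j * a l))
                       / Gamma (of_real (real n / real m))"
proof (intro allI impI)
  fix n :: nat
  assume "n \<ge> 1"
  define l where "l = (n - 1) mod m + 1"
  define J where "J = (n - 1) div m"
  have l: "l \<in> {1..m}"
    using m by (auto simp: l_def Suc_le_eq)
  have n: "n = l + m * J"
    using \<open>n \<ge> 1\<close> div_mult_mod_eq[of "n - 1" m] by (simp add: l_def J_def algebra_simps)
  show "d n = (a n + (\<Sum>(j, l) \<in> {(j, l). j \<ge> 1 \<and> l \<ge> 1 \<and> l + j * m = n}. dcoef (real l / real m) j * a l))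
              / Gamma (of_real (real n / real m))"
    unfolding n using g_def d_def l by (intro coefficient_formula_in_residue_class[OF m l gev, where G = "g l"]) auto
qed

end
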